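(* In the standing setup, let $T$ be a valid partial table and let $T(i,b)=\emptyset$. Then either there exists a valid partial table $T'$ with strictly more nonempty positions than $T$, or there are at least $(n-|S_i|)(n-|C_b|)$ positions that are $(i,b)$-removable.
   Context: Standing setup: $M$ is a matroid of rank $n$ on ground set $E$; $f\le n$ is a positive integer; for each $i\in\{1,\dots,f\}$ and $j\in\{1,\dots,n\}$, $B_{i,j}$ is a basis of $M$, and the sets $B_{i,j}$ are pairwise disjoint. A valid partial table $T$ assigns to each position $(i,j)\in[f]\times[n]$ either the symbol $\emptyset$ (the position is empty) or an element $T(i,j)\in B_{i,j}$, such that for every row $i$ the set $S_i=\{T(i,j):T(i,j)\ne\emptyset\}$ is independent and for every column $j$ the set $C_j=\{T(i,j):T(i,j)\neq\emptyset\}$ is independent. Notation: for a set $A$ and an element $z$, "$A+z$ is independent" means $z\notin A$ and $A\cup\{z\}$ is independent; $A-z$ denotes $A\setminus\{z\}$ for $z\in A$; expressions such as $A-z+w$ are read left to right with the same convention. Definitions (with $T(i,b)=\emptyset$): an element $x\in B_{i,c}$ is $(i,b)$-addable if either (1) $T(i,c)=\emptyset$ and both $S_i+x$ and $C_c+x$ are independent, or (2) $T(i,c)=x'\neq\emptyset$ and there is $y\in B_{i,b}$ such that $C_b+y$ and $S_i-x'+y+x$ are independent. A position $(j,c)$ with $T(j,c)=y'\neq\emptyset$ is $(i,b)$-removable if there is an $(i,b)$-addable element $x\in B_{i,c}$ such that $C_c-y'+x$ is independent. *)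

theory Defs
  imports Main
begin

definition matroid :: "'a set \<Rightarrow> ('a set \<Rightarrow> bool) \<Rightarrow> bool" where
  "matroid E indep \<longleftrightarrow>
     finite E \<and> indep {} \<and>
     (\<forall>A. indep A \<longrightarrow> A \<subseteq> E) \<and>
     (\<forall>A B. indep B \<and> A \<subseteq> B \<longrightarrow> indep A) \<and>
     (\<forall>A B. indep A \<and> indep B \<and> card A < card B \<longrightarrow>
        (\<exists>x \<in> B - A. indep (insert x A)))"

definition basis :: "'a set \<Rightarrow> ('a set \<Rightarrow> bool) \<Rightarrow> 'a set \<Rightarrow> bool" where
  "basis E indep B \<longleftrightarrow> B \<subseteq> E \<and> indep B \<and> (\<forall>C. C \<subseteq> E \<and> indep C \<and> B \<subseteq> C \<longrightarrow> C = B)"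

definition matroid_rank_is :: "'a set \<Rightarrow> ('a set \<Rightarrow> bool) \<Rightarrow> nat \<Rightarrow> bool" where
  "matroid_rank_is E indep n \<longleftrightarrow> (\<exists>B. basis E indep B \<and> card B = n)"

definition indep_add :: "('a set \<Rightarrow> bool) \<Rightarrow> 'a set \<Rightarrow> 'a \<Rightarrow> bool" where
  "indep_add indep A z \<longleftrightarrow> z \<notin> A \<and> indep (insert z A)"

(* Tables: positions (i,j) with i \<in> {1..f}, j \<in> {1..n}; None = empty. *)
definition row_set :: "nat \<Rightarrow> (nat \<Rightarrow> nat \<Rightarrow> 'a option) \<Rightarrow> nat \<Rightarrow> 'a set" where
  "row_set n T i = {x. \<exists>j \<in> {1..n}. T i j = Some x}"

definition col_set :: "nat \<Rightarrow> (nat \<Rightarrow> nat \<Rightarrow> 'a option) \<Rightarrow> nat \<Rightarrow> 'a set" where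
  "col_set f T j = {x. \<exists>i \<in> {1..f}. T i j = Some x}"

definition valid_table ::
  "('a set \<Rightarrow> bool) \<Rightarrow> nat \<Rightarrow> nat \<Rightarrow> (nat \<Rightarrow> nat \<Rightarrow> 'a set) \<Rightarrow> (nat \<Rightarrow> nat \<Rightarrow> 'a option) \<Rightarrow> bool" where
  "valid_table indep f n B T \<longleftrightarrow>
     (\<forall>i \<in> {1..f}. \<forall>j \<in> {1..n}. \<forall>x. T i j = Some x \<longrightarrow> x \<in> B i j) \<and>
     (\<forall>i \<in> {1..f}. indep (row_set n T i)) \<and>
     (\<forall>j \<in> {1..n}. indep (col_set f T j))"

definition num_nonempty :: "nat \<Rightarrow> nat \<Rightarrow> (nat \<Rightarrow> nat \<Rightarrow> 'a option) \<Rightarrow> nat" where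
  "num_nonempty f n T = card {(i, j). i \<in> {1..f} \<and> j \<in> {1..n} \<and> T i j \<noteq> None}"

definition addable ::
  "('a set \<Rightarrow> bool) \<Rightarrow> nat \<Rightarrow> nat \<Rightarrow> (nat \<Rightarrow> nat \<Rightarrow> 'a set) \<Rightarrow> (nat \<Rightarrow> nat \<Rightarrow> 'a option)
     \<Rightarrow> nat \<Rightarrow> nat \<Rightarrow> nat \<Rightarrow> 'a \<Rightarrow> bool" where
  "addable indep f n B T i b c x \<longleftrightarrow>
     x \<in> B i c \<and>
     ((T i c = None \<and> indep_add indep (row_set n T i) x \<and> indep_add indep (col_set f T c) x) \<or>
      (\<exists>x'. T i c = Some x' \<and>
         (\<exists>y \<in> B i b. indep_add indep (col_set f T b) y \<and>
            y \<notin> row_set n T i - {x'} \<and>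
            indep_add indep (insert y (row_set n T i - {x'})) x)))"

definition removable ::
  "('a set \<Rightarrow> bool) \<Rightarrow> nat \<Rightarrow> nat \<Rightarrow> (nat \<Rightarrow> nat \<Rightarrow> 'a set) \<Rightarrow> (nat \<Rightarrow> nat \<Rightarrow> 'a option)
     \<Rightarrow> nat \<Rightarrow> nat \<Rightarrow> nat \<Rightarrow> nat \<Rightarrow> bool" where
  "removable indep f n B T i b j c \<longleftrightarrow>
     (\<exists>y'. T j c = Some y' \<and>
        (\<exists>x \<in> B i c. addable indep f n B T i b c x \<and>
           indep_add indep (col_set f T c - {y'}) x))"

end

theory Submission
  imports Defs
begin

text \<open>Suppose the table cannot be extended. Then no \<open>y \<in> B i b\<close> fits into both row \<open>i\<close> and
  column \<open>b\<close>; the at least \<open>n - card C\<^sub>b\<close> elements of \<open>B i b\<close> that fit into column \<open>b\<close> are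
  therefore spanned by \<open>S\<^sub>i\<close>, and by exchange counting in the matroid they can be swapped against
  at least \<open>n - card C\<^sub>b\<close> entries \<open>a = T i c\<close> of row \<open>i\<close>. For each such column \<open>c\<close>, moving \<open>y\<close>
  into \<open>(i, b)\<close> frees room in row \<open>i\<close> for at least \<open>n - card S\<^sub>i\<close> elements of \<open>B i c\<close>. None
  of them can replace \<open>a\<close> in column \<open>c\<close> (that would extend the table), so a second exchange
  count shows they can replace at least \<open>n - card S\<^sub>i\<close> entries of column \<open>c\<close>, each making its
  position removable.\<close>

lemma matroid_indep_ground: "matroid E indep \<Longrightarrow> indep A \<Longrightarrow> A \<subseteq> E"
  unfolding matroid_def by simp

lemma matroid_indep_finite: "matroid E indep \<Longrightarrow> indep A \<Longrightarrow> finite A"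
  by (meson finite_subset matroid_def matroid_indep_ground)

lemma matroid_indep_subset:
  assumes "matroid E indep" "indep B" "A \<subseteq> B" shows "indep A"
proof -
  have "\<forall>A B. indep B \<and> A \<subseteq> B \<longrightarrow> indep A" using assms(1) unfolding matroid_def by simp
  with assms show ?thesis by blast
qed

lemma matroid_augment:
  assumes "matroid E indep" "indep A" "indep B" "card A < card B"
  shows "\<exists>x\<in>B - A. indep (insert x A)"
proof -
  have "\<forall>A B. indep A \<and> indep B \<and> card A < card B \<longrightarrow> (\<exists>x\<in>B - A. indep (insert x A))"
    using assms(1) unfolding matroid_def by simp
  with assms show ?thesis by blast
qed

lemma matroid_augment_to_card:
  assumes M: "matroid E indep" and I: "indep I" and J: "indep J" and le: "card I \<le> card J"
  shows "\<exists>K\<subseteq>J. indep (I \<union> K) \<and> card (I \<union> K) = card J"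
  using I le
proof (induction "card J - card I" arbitrary: I)
  case 0
  then show ?case by (intro exI[of _ "{}"]) simp
next
  case (Suc k)
  then have "card I < card J" by linarith
  then obtain x where x: "x \<in> J - I" "indep (insert x I)"
    using matroid_augment[OF M Suc.prems(1) J] by blast
  have "card (insert x I) = Suc (card I)"
    using x(1) matroid_indep_finite[OF M Suc.prems(1)] by simp
  with Suc.hyps(2) Suc.prems(2) have "k = card J - card (insert x I)" "card (insert x I) \<le> card J"
    by linarith+
  then obtain K where "K \<subseteq> J" "indep (insert x I \<union> K)" "card (insert x I \<union> K) = card J"
    using Suc.hyps(1) x(2) by blast
  with x show ?case by (intro exI[of _ "insert x K"]) auto
qed

lemma matroid_basis_card_eq:
  assumes M: "matroid E indep" and "basis E indep B1" and "basis E indep B2"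
  shows "card B1 = card B2"
proof -
  have "\<not> card X < card Y" if X: "basis E indep X" and Y: "basis E indep Y" for X Y
  proof
    have iX: "indep X" and maxX: "\<forall>C. C \<subseteq> E \<and> indep C \<and> X \<subseteq> C \<longrightarrow> C = X"
      using X unfolding basis_def by auto
    have iY: "indep Y" using Y unfolding basis_def by auto
    assume "card X < card Y"
    then obtain x where x: "x \<in> Y - X" "indep (insert x X)"
      using matroid_augment[OF M iX iY] by blast
    then have "insert x X = X"
      using maxX matroid_indep_ground[OF M x(2)] by blast
    with x(1) show False by blast
  qed
  with assms(2,3) show ?thesis by (meson linorder_neqE_nat)
qed

text \<open>The non-extending elements of \<open>Bs\<close> form an independent set none of whose elements
  augments \<open>A\<close>, so there are at most \<open>card A\<close> of them.\<close>
lemma card_extending_elements_ge: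
  assumes M: "matroid E indep" and A: "indep A" and Bs: "indep Bs"
  shows "card Bs - card A \<le> card {x\<in>Bs. indep_add indep A x}"
proof -
  define Y where "Y = {x\<in>Bs. indep_add indep A x}"
  define Z where "Z = {x\<in>Bs. \<not> indep_add indep A x}"
  have "card Z \<le> card A"
  proof (rule ccontr)
    assume "\<not> card Z \<le> card A"
    then have "card A < card Z" by simp
    moreover have "indep Z" by (rule matroid_indep_subset[OF M Bs]) (auto simp: Z_def)
    ultimately obtain z where "z \<in> Z - A" "indep (insert z A)"
      using matroid_augment[OF M A] by blast
    then show False by (simp add: Z_def indep_add_def)
  qed
  moreover have "card Bs = card Y + card Z"
  proof -
    have "finite Y" "finite Z" "Y \<inter> Z = {}"
      using matroid_indep_finite[OF M Bs] unfolding Y_def Z_def by auto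
    moreover have "Bs = Y \<union> Z" unfolding Y_def Z_def by blast
    ultimately show ?thesis by (simp add: card_Un_disjoint)
  qed
  ultimately show ?thesis unfolding Y_def by linarith
qed

text \<open>If the set \<open>D\<close> of swappable elements were smaller than \<open>X\<close>, augment it by some
  \<open>x \<in> X\<close> and then from \<open>A\<close> up to size \<open>card A\<close>: the result is \<open>A - k + x\<close> for some
  \<open>k \<notin> D\<close>, a contradiction.\<close>
lemma card_le_card_exchangeable:
  assumes M: "matroid E indep" and A: "indep A" and X: "indep X" and disj: "X \<inter> A = {}"
    and dep: "\<forall>x\<in>X. \<not> indep (insert x A)"
  shows "card X \<le> card {a\<in>A. \<exists>x\<in>X. indep (insert x (A - {a}))}"
proof (rule ccontr)
  define D where "D = {a\<in>A. \<exists>x\<in>X. indep (insert x (A - {a}))}"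
  assume "\<not> card X \<le> card {a\<in>A. \<exists>x\<in>X. indep (insert x (A - {a}))}"
  then have "card D < card X" unfolding D_def by simp
  moreover have DA: "D \<subseteq> A" unfolding D_def by auto
  ultimately obtain x where x: "x \<in> X - D" "indep (insert x D)"
    using matroid_augment[OF M matroid_indep_subset[OF M A] X] by blast
  have fA: "finite A" using matroid_indep_finite[OF M A] .
  have xA: "x \<notin> A" using disj x(1) by auto
  have "D \<noteq> A" using dep x by blast
  with DA fA have "card D < card A" by (meson psubsetI psubset_card_mono)
  then have "card (insert x D) \<le> card A"
    using DA fA by (simp add: card_insert_if finite_subset)
  then obtain K where K: "K \<subseteq> A" "indep (insert x D \<union> K)" "card (insert x D \<union> K) = card A"
    using matroid_augment_to_card[OF M x(2) A] by blast
  have "\<not> A \<subseteq> D \<union> K"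
  proof
    assume "A \<subseteq> D \<union> K"
    then have "insert x A \<subseteq> insert x D \<union> K" by auto
    then have "card (insert x A) \<le> card A"
      using K matroid_indep_finite[OF M K(2)] card_mono by metis
    with fA xA show False by simp
  qed
  then obtain k where k: "k \<in> A" "k \<notin> D" "k \<notin> K" by blast
  have sub: "insert x D \<union> K \<subseteq> insert x (A - {k})" using k K DA by auto
  moreover have "card (insert x (A - {k})) = card A"
    using fA k(1) xA by (metis card_Suc_Diff1 card_insert_disjoint finite_Diff DiffD1)
  ultimately have "insert x D \<union> K = insert x (A - {k})"
    using K(3) fA by (metis card_subset_eq finite_Diff finite_insert)
  with K(2) have "k \<in> D" unfolding D_def using k(1) x(1) by auto
  with k(2) show False ..
qed

definition table_put :: "(nat \<Rightarrow> nat \<Rightarrow> 'a option) \<Rightarrow> nat \<Rightarrow> nat \<Rightarrow> 'a \<Rightarrow> nat \<Rightarrow> nat \<Rightarrow> 'a option" where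
  "table_put T i d v = T(i := (T i)(d := Some v))"

lemma table_put_apply: "table_put T i d v j c = (if j = i \<and> c = d then Some v else T j c)"
  by (simp add: table_put_def)

lemma row_set_table_put_other: "j \<noteq> i \<Longrightarrow> row_set n (table_put T i d v) j = row_set n T j"
  by (simp add: row_set_def table_put_apply)

lemma col_set_table_put_other: "c \<noteq> d \<Longrightarrow> col_set f (table_put T i d v) c = col_set f T c"
  by (simp add: col_set_def table_put_apply)

lemma num_nonempty_less:
  assumes "\<forall>j c. T j c \<noteq> None \<longrightarrow> T' j c \<noteq> None"
    and "T i b = None" "T' i b \<noteq> None" "i \<in> {1..f}" "b \<in> {1..n}"
  shows "num_nonempty f n T < num_nonempty f n T'"
  unfolding num_nonempty_def
proof (rule psubset_card_mono)
  show "finite {(j, c). j \<in> {1..f} \<and> c \<in> {1..n} \<and> T' j c \<noteq> None}"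
    by (rule finite_subset[of _ "{1..f} \<times> {1..n}"]) auto
  have "(i, b) \<notin> {(j, c). j \<in> {1..f} \<and> c \<in> {1..n} \<and> T j c \<noteq> None}" "(i, b) \<in> {(j, c). j \<in> {1..f} \<and> c \<in> {1..n} \<and> T' j c \<noteq> None}"
    using assms(2-5) by auto
  moreover have "{(j, c). j \<in> {1..f} \<and> c \<in> {1..n} \<and> T j c \<noteq> None}
      \<subseteq> {(j, c). j \<in> {1..f} \<and> c \<in> {1..n} \<and> T' j c \<noteq> None}"
    using assms(1) by auto
  ultimately show "{(j, c). j \<in> {1..f} \<and> c \<in> {1..n} \<and> T j c \<noteq> None}
      \<subset> {(j, c). j \<in> {1..f} \<and> c \<in> {1..n} \<and> T' j c \<noteq> None}"
    by blast
qed

lemma card_pairs_eq_sum_fibres: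
  fixes f n :: nat
  shows "card {(j, c). j \<in> {1..f} \<and> c \<in> {1..n} \<and> P j c} = (\<Sum>c\<in>{1..n}. card {j. j \<in> {1..f} \<and> P j c})"
proof -
  let ?S = "SIGMA c:{1..n}. {j. j \<in> {1..f} \<and> P j c}"
  have "{(j, c). j \<in> {1..f} \<and> c \<in> {1..n} \<and> P j c} = (\<lambda>(c, j). (j, c)) ` ?S"
    by auto
  moreover have "inj_on (\<lambda>(c, j). (j, c)) ?S"
    by (auto simp: inj_on_def)
  ultimately have "card {(j, c). j \<in> {1..f} \<and> c \<in> {1..n} \<and> P j c} = card ?S"
    by (simp add: card_image)
  also have "\<dots> = (\<Sum>c\<in>{1..n}. card {j. j \<in> {1..f} \<and> P j c})"
    by (rule card_SigmaI) (auto intro: finite_subset[of _ "{1..f}"])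
  finally show ?thesis .
qed

lemma card_fibres_ge_mult_le_card_pairs:
  fixes f n k :: nat
  shows "card {c \<in> {1..n}. k \<le> card {j. j \<in> {1..f} \<and> P j c}} * k
           \<le> card {(j, c). j \<in> {1..f} \<and> c \<in> {1..n} \<and> P j c}"
proof -
  let ?G = "\<lambda>c. {j. j \<in> {1..f} \<and> P j c}"
  let ?C = "{c \<in> {1..n}. k \<le> card (?G c)}"
  have "card ?C * k \<le> (\<Sum>c\<in>?C. card (?G c))"
    using sum_bounded_below[of ?C k "\<lambda>c. card (?G c)"] by simp
  also have "\<dots> \<le> (\<Sum>c\<in>{1..n}. card (?G c))"
    by (rule sum_mono2) auto
  also have "\<dots> = card {(j, c). j \<in> {1..f} \<and> c \<in> {1..n} \<and> P j c}"
    by (rule card_pairs_eq_sum_fibres[symmetric])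
  finally show ?thesis .
qed

lemma valid_table_entry:
  "valid_table indep f n B T \<Longrightarrow> j \<in> {1..f} \<Longrightarrow> c \<in> {1..n} \<Longrightarrow> T j c = Some z \<Longrightarrow> z \<in> B j c"
  unfolding valid_table_def by blast

lemma valid_table_row_indep: "valid_table indep f n B T \<Longrightarrow> j \<in> {1..f} \<Longrightarrow> indep (row_set n T j)"
  unfolding valid_table_def by blast

lemma valid_table_col_indep: "valid_table indep f n B T \<Longrightarrow> c \<in> {1..n} \<Longrightarrow> indep (col_set f T c)"
  unfolding valid_table_def by blast

locale basis_array =
  fixes E :: "'a set" and indep :: "'a set \<Rightarrow> bool"
    and n f :: nat and B :: "nat \<Rightarrow> nat \<Rightarrow> 'a set"
  assumes M: "matroid E indep"
    and rk: "matroid_rank_is E indep n"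
    and bases: "\<forall>i' \<in> {1..f}. \<forall>j \<in> {1..n}. basis E indep (B i' j)"
    and disj: "\<forall>i1 \<in> {1..f}. \<forall>j1 \<in> {1..n}. \<forall>i2 \<in> {1..f}. \<forall>j2 \<in> {1..n}.
                 (i1, j1) \<noteq> (i2, j2) \<longrightarrow> B i1 j1 \<inter> B i2 j2 = {}"
begin

lemma B_indep: "j \<in> {1..f} \<Longrightarrow> c \<in> {1..n} \<Longrightarrow> indep (B j c)"
  using bases unfolding basis_def by blast

lemma B_card: "j \<in> {1..f} \<Longrightarrow> c \<in> {1..n} \<Longrightarrow> card (B j c) = n"
  using rk bases matroid_basis_card_eq[OF M] unfolding matroid_rank_is_def by metis

lemma B_disjointD:
  "x \<in> B j c \<Longrightarrow> x \<in> B j' c' \<Longrightarrow> j \<in> {1..f} \<Longrightarrow> c \<in> {1..n} \<Longrightarrow> j' \<in> {1..f} \<Longrightarrow> c' \<in> {1..n}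
    \<Longrightarrow> j = j' \<and> c = c'"
  using disj by blast

lemma valid_table_entry_unique:
  assumes "valid_table indep f n B T" "T j c = Some z" "T j' c' = Some z"
    "j \<in> {1..f}" "c \<in> {1..n}" "j' \<in> {1..f}" "c' \<in> {1..n}"
  shows "j = j' \<and> c = c'"
  using assms by (meson B_disjointD valid_table_entry)

lemma valid_table_col_set_B:
  assumes T: "valid_table indep f n B T" and i: "i \<in> {1..f}" and c: "c \<in> {1..n}"
    and x: "x \<in> B i c" "x \<in> col_set f T c"
  shows "T i c = Some x"
proof -
  obtain j where j: "j \<in> {1..f}" and Tj: "T j c = Some x" using x(2) unfolding col_set_def by blast
  then have "j = i" using B_disjointD[OF valid_table_entry[OF T j c Tj] x(1) j c i c] by blast
  with Tj show ?thesis by simp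
qed

lemma row_set_table_put:
  assumes "valid_table indep f n B T" "i \<in> {1..f}" "d \<in> {1..n}"
  shows "row_set n (table_put T i d v) i \<subseteq> insert v (row_set n T i - set_option (T i d))"
proof
  fix z assume "z \<in> row_set n (table_put T i d v) i"
  then obtain c where c: "c \<in> {1..n}" "table_put T i d v i c = Some z" unfolding row_set_def by blast
  show "z \<in> insert v (row_set n T i - set_option (T i d))"
  proof (cases "c = d")
    case False
    then have "T i c = Some z" using c(2) by (simp add: table_put_apply)
    moreover have "T i d \<noteq> Some z"
      using valid_table_entry_unique[OF assms(1) _ \<open>T i c = Some z\<close>] False assms(2,3) c(1) by blast
    ultimately show ?thesis using c(1) unfolding row_set_def by auto
  qed (use c(2) in \<open>simp add: table_put_apply\<close>)
qed

lemma col_set_table_put: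
  assumes "valid_table indep f n B T" "i \<in> {1..f}" "d \<in> {1..n}"
  shows "col_set f (table_put T i d v) d \<subseteq> insert v (col_set f T d - set_option (T i d))"
proof
  fix z assume "z \<in> col_set f (table_put T i d v) d"
  then obtain j where j: "j \<in> {1..f}" "table_put T i d v j d = Some z" unfolding col_set_def by blast
  show "z \<in> insert v (col_set f T d - set_option (T i d))"
  proof (cases "j = i")
    case False
    then have "T j d = Some z" using j(2) by (simp add: table_put_apply)
    moreover have "T i d \<noteq> Some z"
      using valid_table_entry_unique[OF assms(1) _ \<open>T j d = Some z\<close>] False assms(2,3) j(1) by blast
    ultimately show ?thesis using j(1) unfolding col_set_def by auto
  qed (use j(2) in \<open>simp add: table_put_apply\<close>)
qed

lemma valid_table_put:
  assumes T: "valid_table indep f n B T" and i: "i \<in> {1..f}" and d: "d \<in> {1..n}" and v: "v \<in> B i d"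
    and row: "indep (insert v (row_set n T i - set_option (T i d)))"
    and col: "indep (insert v (col_set f T d - set_option (T i d)))"
  shows "valid_table indep f n B (table_put T i d v)"
  unfolding valid_table_def
proof (intro conjI ballI allI impI)
  fix j c z assume "j \<in> {1..f}" "c \<in> {1..n}" "table_put T i d v j c = Some z"
  then show "z \<in> B j c"
    using v valid_table_entry[OF T] by (auto simp: table_put_apply split: if_splits)
next
  fix j assume "j \<in> {1..f}"
  then show "indep (row_set n (table_put T i d v) j)"
    using valid_table_row_indep[OF T] row matroid_indep_subset[OF M] row_set_table_put[OF T i d, of v]
    by (cases "j = i") (auto simp: row_set_table_put_other)
next
  fix c assume "c \<in> {1..n}"
  then show "indep (col_set f (table_put T i d v) c)"
    using valid_table_col_indep[OF T] col matroid_indep_subset[OF M] col_set_table_put[OF T i d, of v]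
    by (cases "c = d") (auto simp: col_set_table_put_other)
qed

end

locale empty_cell = basis_array +
  fixes T :: "nat \<Rightarrow> nat \<Rightarrow> 'a option" and i b :: nat
  assumes valid: "valid_table indep f n B T"
    and i: "i \<in> {1..f}" and b: "b \<in> {1..n}"
    and empty: "T i b = None"
begin

definition extendable :: bool where
  "extendable \<longleftrightarrow> (\<exists>T'. valid_table indep f n B T' \<and> num_nonempty f n T < num_nonempty f n T')"

lemma not_in_row_set:
  assumes y: "y \<in> B i b" shows "y \<notin> row_set n T i"
proof
  assume "y \<in> row_set n T i"
  then obtain c where c: "c \<in> {1..n}" and Tc: "T i c = Some y" unfolding row_set_def by blast
  then have "c = b" using B_disjointD[OF valid_table_entry[OF valid i c Tc] y i c i b] by blast
  with Tc empty show False by simp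
qed

lemma extendable_if_augments_row:
  assumes y: "y \<in> B i b"
    and col: "indep (insert y (col_set f T b))" and row: "indep (insert y (row_set n T i))"
  shows extendable
  unfolding extendable_def
proof (intro exI conjI)
  show "valid_table indep f n B (table_put T i b y)"
    using valid_table_put[OF valid i b y] col row empty by simp
  show "num_nonempty f n T < num_nonempty f n (table_put T i b y)"
    using empty i b by (intro num_nonempty_less[where i = i and b = b]) (auto simp: table_put_apply)
qed

lemma extendable_if_exchange:
  assumes c: "c \<in> {1..n}" and a: "T i c = Some a"
    and y: "y \<in> B i b" and col_b: "indep (insert y (col_set f T b))"
    and x: "x \<in> B i c" and row: "indep (insert x (insert y (row_set n T i - {a})))"
    and col_c: "indep (insert x (col_set f T c - {a}))"
  shows extendable
  unfolding extendable_def
proof (intro exI conjI)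
  define T1 where "T1 = table_put T i c x"
  have "c \<noteq> b" using a empty by auto
  have row1: "row_set n T1 i \<subseteq> insert x (row_set n T i - {a})"
    using row_set_table_put[OF valid i c, of x] a unfolding T1_def by simp
  have T1: "valid_table indep f n B T1"
    unfolding T1_def
  proof (rule valid_table_put[OF valid i c x])
    show "indep (insert x (row_set n T i - set_option (T i c)))"
      using a by (intro matroid_indep_subset[OF M row]) auto
  qed (use a col_c in simp)
  have T1b: "T1 i b = None" using empty \<open>c \<noteq> b\<close> by (simp add: T1_def table_put_apply)
  show "valid_table indep f n B (table_put T1 i b y)"
  proof (rule valid_table_put[OF T1 i b y])
    show "indep (insert y (row_set n T1 i - set_option (T1 i b)))"
      using row1 T1b by (intro matroid_indep_subset[OF M row]) auto
    show "indep (insert y (col_set f T1 b - set_option (T1 i b)))"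
      using col_b T1b \<open>c \<noteq> b\<close> by (simp add: T1_def col_set_table_put_other)
  qed
  show "num_nonempty f n T < num_nonempty f n (table_put T1 i b y)"
    using empty i b by (intro num_nonempty_less[where i = i and b = b]) (auto simp: T1_def table_put_apply)
qed

lemma col_set_entry: "z \<in> col_set f T c \<Longrightarrow> \<exists>j\<in>{1..f}. T j c = Some z"
  unfolding col_set_def by blast

lemma card_exchangeable_le_card_removable_rows:
  assumes c: "c \<in> {1..n}" and addable: "\<forall>x\<in>X. addable indep f n B T i b c x"
    and disj: "X \<inter> col_set f T c = {}"
  shows "card {z \<in> col_set f T c. \<exists>x\<in>X. indep (insert x (col_set f T c - {z}))}
           \<le> card {j. j \<in> {1..f} \<and> removable indep f n B T i b j c}"
proof (rule surj_card_le[where f = "\<lambda>j. the (T j c)"])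
  show "finite {j. j \<in> {1..f} \<and> removable indep f n B T i b j c}"
    by (auto intro: finite_subset[of _ "{1..f}"])
  show "{z \<in> col_set f T c. \<exists>x\<in>X. indep (insert x (col_set f T c - {z}))}
          \<subseteq> (\<lambda>j. the (T j c)) ` {j. j \<in> {1..f} \<and> removable indep f n B T i b j c}"
  proof
    fix z assume "z \<in> {z \<in> col_set f T c. \<exists>x\<in>X. indep (insert x (col_set f T c - {z}))}"
    then obtain x where x: "x \<in> X" and z: "z \<in> col_set f T c"
      and swap: "indep (insert x (col_set f T c - {z}))" by blast
    obtain j where j: "j \<in> {1..f}" and Tj: "T j c = Some z" using col_set_entry[OF z] by blast
    have x_add: "addable indep f n B T i b c x" using addable x by blast
    then have "x \<in> B i c" unfolding addable_def by blast
    moreover have "x \<notin> col_set f T c - {z}" using x disj by blast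
    ultimately have "removable indep f n B T i b j c"
      unfolding removable_def indep_add_def using Tj x_add swap by blast
    with j Tj show "z \<in> (\<lambda>j. the (T j c)) ` {j. j \<in> {1..f} \<and> removable indep f n B T i b j c}"
      by force
  qed
qed

lemma card_removable_rows_ge:
  assumes not_ext: "\<not> extendable"
    and c: "c \<in> {1..n}" and a: "T i c = Some a"
    and y: "y \<in> B i b" and col_b: "indep_add indep (col_set f T b) y"
    and row_exch: "indep (insert y (row_set n T i - {a}))"
    and row_dep: "\<not> indep (insert y (row_set n T i))"
  shows "n - card (row_set n T i) \<le> card {j. j \<in> {1..f} \<and> removable indep f n B T i b j c}"
proof -
  define S where "S = row_set n T i"
  define C where "C = col_set f T c"
  define A where "A = insert y (S - {a})"
  define X where "X = {x \<in> B i c. indep_add indep A x}"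
  have aS: "a \<in> S" unfolding S_def row_set_def using c a by blast
  have yS: "y \<notin> S" unfolding S_def using not_in_row_set[OF y] .
  have "finite S" unfolding S_def using matroid_indep_finite[OF M valid_table_row_indep[OF valid i]] .
  with aS yS have "card A = card S"
    unfolding A_def using card_Suc_Diff1[of S a] by (simp add: card_insert_if)
  then have card_X: "n - card S \<le> card X"
    using card_extending_elements_ge[OF M row_exch B_indep[OF i c]]
    unfolding X_def B_card[OF i c] by (simp add: A_def S_def)
  have X_B: "X \<subseteq> B i c" unfolding X_def by blast
  have X_a: "a \<notin> X"
  proof
    assume "a \<in> X"
    then have "indep (insert a A)" unfolding X_def indep_add_def by blast
    moreover have "insert a A = insert y S" unfolding A_def using aS by blast
    ultimately show False using row_dep unfolding S_def by simp
  qed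
  have disj: "X \<inter> C = {}"
  proof -
    have "x = a" if "x \<in> X" "x \<in> C" for x
      using valid_table_col_set_B[OF valid i c, of x] that X_B a unfolding C_def by auto
    with X_a show ?thesis by blast
  qed
  have no_aug: "\<forall>x\<in>X. \<not> indep (insert x C)"
  proof (intro ballI notI)
    fix x assume x: "x \<in> X" and aug: "indep (insert x C)"
    from aug have "indep (insert x (C - {a}))" by (rule matroid_indep_subset[OF M]) blast
    moreover have "indep (insert x (insert y (S - {a})))"
      using x unfolding X_def A_def indep_add_def by blast
    ultimately have extendable
      using extendable_if_exchange[OF c a y _ _] col_b x X_B unfolding S_def C_def indep_add_def by blast
    with not_ext show False ..
  qed
  have addable: "\<forall>x\<in>X. addable indep f n B T i b c x"
    unfolding addable_def using X_B a y col_b yS unfolding X_def A_def S_def by blast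
  have "card X \<le> card {z\<in>C. \<exists>x\<in>X. indep (insert x (C - {z}))}"
    by (rule card_le_card_exchangeable[OF M _ matroid_indep_subset[OF M B_indep[OF i c] X_B] disj no_aug])
       (simp add: C_def valid_table_col_indep[OF valid c])
  also have "\<dots> \<le> card {j. j \<in> {1..f} \<and> removable indep f n B T i b j c}"
    unfolding C_def by (rule card_exchangeable_le_card_removable_rows[OF c addable disj[unfolded C_def]])
  finally show ?thesis using card_X unfolding S_def by linarith
qed

lemma card_removable_positions_ge:
  assumes not_ext: "\<not> extendable"
  shows "(n - card (row_set n T i)) * (n - card (col_set f T b))
           \<le> card {(j, c). j \<in> {1..f} \<and> c \<in> {1..n} \<and> removable indep f n B T i b j c}"
proof -
  define S where "S = row_set n T i"
  define C where "C = col_set f T b"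
  define Y where "Y = {y \<in> B i b. indep_add indep C y}"
  define G where "G c = {j. j \<in> {1..f} \<and> removable indep f n B T i b j c}" for c
  define Cols where "Cols = {c \<in> {1..n}. n - card S \<le> card (G c)}"
  have S: "indep S" unfolding S_def using valid_table_row_indep[OF valid i] .
  have Y_B: "Y \<subseteq> B i b" unfolding Y_def by blast
  have row_dep: "\<forall>y\<in>Y. \<not> indep (insert y S)"
    using extendable_if_augments_row not_ext Y_B unfolding Y_def C_def S_def indep_add_def by blast
  have disj: "Y \<inter> S = {}" using not_in_row_set Y_B unfolding S_def by blast
  define R where "R = {a\<in>S. \<exists>y\<in>Y. indep (insert y (S - {a}))}"
  have "n - card C \<le> card Y"
    using card_extending_elements_ge[OF M valid_table_col_indep[OF valid b] B_indep[OF i b]]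
    unfolding Y_def C_def B_card[OF i b] .
  also have "card Y \<le> card R"
    unfolding R_def by (rule card_le_card_exchangeable[OF M S matroid_indep_subset[OF M B_indep[OF i b] Y_B] disj row_dep])
  also have "card R \<le> card Cols"
  proof (rule surj_card_le)
    show "finite Cols" unfolding Cols_def by simp
    show "R \<subseteq> (\<lambda>c. the (T i c)) ` Cols"
    proof
      fix a assume "a \<in> R"
      then obtain y where a: "a \<in> S" and y: "y \<in> Y" and exch: "indep (insert y (S - {a}))"
        unfolding R_def by blast
      then obtain c where c: "c \<in> {1..n}" and Tc: "T i c = Some a" unfolding S_def row_set_def by blast
      have "n - card S \<le> card (G c)"
        unfolding G_def S_def
        by (rule card_removable_rows_ge[OF not_ext c Tc])
           (use y exch row_dep in \<open>auto simp: Y_def C_def S_def\<close>)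
      with c Tc show "a \<in> (\<lambda>c. the (T i c)) ` Cols" unfolding Cols_def by force
    qed
  qed
  finally have "(n - card S) * (n - card C) \<le> card Cols * (n - card S)"
    by (simp add: mult.commute)
  also have "\<dots> \<le> card {(j, c). j \<in> {1..f} \<and> c \<in> {1..n} \<and> removable indep f n B T i b j c}"
    unfolding Cols_def G_def by (rule card_fibres_ge_mult_le_card_pairs)
  finally show ?thesis unfolding S_def C_def .
qed

end

theorem mainTheorem6:
  fixes E :: "'a set" and indep :: "'a set \<Rightarrow> bool"
    and n f :: nat and B :: "nat \<Rightarrow> nat \<Rightarrow> 'a set"
    and T :: "nat \<Rightarrow> nat \<Rightarrow> 'a option" and i b :: nat
  assumes M: "matroid E indep"
    and rk: "matroid_rank_is E indep n"
    and fpos: "0 < f" and fn: "f \<le> n"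
    and bases: "\<forall>i' \<in> {1..f}. \<forall>j \<in> {1..n}. basis E indep (B i' j)"
    and disj: "\<forall>i1 \<in> {1..f}. \<forall>j1 \<in> {1..n}. \<forall>i2 \<in> {1..f}. \<forall>j2 \<in> {1..n}.
                 (i1, j1) \<noteq> (i2, j2) \<longrightarrow> B i1 j1 \<inter> B i2 j2 = {}"
    and valid: "valid_table indep f n B T"
    and i: "i \<in> {1..f}" and b: "b \<in> {1..n}"
    and empty: "T i b = None"
  shows "(\<exists>T'. valid_table indep f n B T' \<and> num_nonempty f n T' > num_nonempty f n T)
         \<or> (n - card (row_set n T i)) * (n - card (col_set f T b))
             \<le> card {(j, c). j \<in> {1..f} \<and> c \<in> {1..n} \<and> removable indep f n B T i b j c}"
proof -
  interpret empty_cell E indep n f B T i b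
    using M rk bases disj valid i b empty by unfold_locales
  show ?thesis
  proof (cases extendable)
    case True
    then show ?thesis unfolding extendable_def by blast
  next
    case False
    then show ?thesis by (intro disjI2 card_removable_positions_ge)
  qed
qed

end
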